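(* Let $\mathcal G=(V,E)$ be a connected DAG with $|V|\ge 3$ which has at least one subset $W\subseteq V$ of three vertices whose vertex-induced subgraph is connected, has a skeleton that is not the complete graph on three vertices, and is not a v-structure (i.e. not of the form $x\to z\leftarrow y$). Let $\mathcal A,\mathcal B$ be finite sets and $f:\mathcal A\to\mathcal B$ a surjection with $|\mathcal A|>|\mathcal B|>1$. Then $\hat f(\mathrm{im}(\mathcal G,\mathcal A))\not\subseteq \mathrm{im}(\mathcal G,\mathcal B)$; that is, there is a distribution on $\mathcal A^V$ factorising over $\mathcal G$ whose image under coordinatewise application of $f$ does not factorise over $\mathcal G$.
   Context: For a finite DAG $\mathcal G=(V,E)$ and a finite set $\mathcal C$, $\mathrm{im}(\mathcal G,\mathcal C)$ is the set of all probability distributions on $\mathcal C^V$ that factorise over $\mathcal G$, i.e. of the form $p(x)=\prod_{v\in V}q_v(x_v\mid x_{pa(v)})$ for conditional distributions $q_v$, where $pa(v)$ is the set of parents of $v$. For $f:\mathcal A\to\mathcal B$, $\hat f$ maps a distribution on $\mathcal A^V$ to its pushforward (image measure) on $\mathcal B^V$ under the coordinatewise map $(x_v)_v\mapsto(f(x_v))_v$. The vertex-induced subgraph on $W$ has vertex set $W$ and all edges of $E$ with both endpoints in $W$; its skeleton is the underlying undirected graph. *)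

theory Defs
  imports Complex_Main "HOL-Library.FuncSet"
begin

definition is_dag :: "'v set \<Rightarrow> ('v \<times> 'v) set \<Rightarrow> bool" where
  "is_dag V E \<longleftrightarrow> finite V \<and> E \<subseteq> V \<times> V \<and> acyclic E"

definition graph_connected :: "'v set \<Rightarrow> ('v \<times> 'v) set \<Rightarrow> bool" where
  "graph_connected V E \<longleftrightarrow> (\<forall>u\<in>V. \<forall>w\<in>V. (u, w) \<in> ((E \<inter> V \<times> V) \<union> (E \<inter> V \<times> V)\<inverse>)\<^sup>*)"

definition induced_edges :: "('v \<times> 'v) set \<Rightarrow> 'v set \<Rightarrow> ('v \<times> 'v) set" where
  "induced_edges E W = E \<inter> (W \<times> W)"

definition skeleton_complete :: "'v set \<Rightarrow> ('v \<times> 'v) set \<Rightarrow> bool" where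
  "skeleton_complete W E' \<longleftrightarrow> (\<forall>u\<in>W. \<forall>w\<in>W. u \<noteq> w \<longrightarrow> (u, w) \<in> E' \<or> (w, u) \<in> E')"

definition is_v_structure :: "'v set \<Rightarrow> ('v \<times> 'v) set \<Rightarrow> bool" where
  "is_v_structure W E' \<longleftrightarrow> (\<exists>x y z. x \<noteq> y \<and> x \<noteq> z \<and> y \<noteq> z \<and> W = {x, y, z}
      \<and> E' = {(x, z), (y, z)})"

definition parents :: "('v \<times> 'v) set \<Rightarrow> 'v \<Rightarrow> 'v set" where
  "parents E v = {u. (u, v) \<in> E}"

definition is_distribution :: "'v set \<Rightarrow> 'c set \<Rightarrow> (('v \<Rightarrow> 'c) \<Rightarrow> real) \<Rightarrow> bool" where
  "is_distribution V C p \<longleftrightarrow> (\<forall>x. x \<notin> (V \<rightarrow>\<^sub>E C) \<longrightarrow> p x = 0)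
     \<and> (\<forall>x\<in>V \<rightarrow>\<^sub>E C. p x \<ge> 0) \<and> (\<Sum>x\<in>V \<rightarrow>\<^sub>E C. p x) = 1"

text \<open>im(G, C): distributions on C^V of the form p(x) = \<Prod>_v q_v(x_v | x_pa(v)),
  where each q_v(\<cdot> | u) is a probability distribution on C for every parent
  configuration u \<in> C^pa(v).\<close>
definition im :: "'v set \<Rightarrow> ('v \<times> 'v) set \<Rightarrow> 'c set \<Rightarrow> (('v \<Rightarrow> 'c) \<Rightarrow> real) set" where
  "im V E C = {p. is_distribution V C p \<and>
     (\<exists>q :: 'v \<Rightarrow> 'c \<Rightarrow> ('v \<Rightarrow> 'c) \<Rightarrow> real.
        (\<forall>v\<in>V. \<forall>u\<in>parents E v \<rightarrow>\<^sub>E C.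
            (\<forall>c\<in>C. q v c u \<ge> 0) \<and> (\<Sum>c\<in>C. q v c u) = 1)
      \<and> (\<forall>x\<in>V \<rightarrow>\<^sub>E C. p x = (\<Prod>v\<in>V. q v (x v) (restrict x (parents E v)))))}"

definition push :: "'v set \<Rightarrow> 'a set \<Rightarrow> ('a \<Rightarrow> 'b) \<Rightarrow> (('v \<Rightarrow> 'a) \<Rightarrow> real) \<Rightarrow> ('v \<Rightarrow> 'b) \<Rightarrow> real" where
  "push V A f p = (\<lambda>y. \<Sum>x\<in>{x \<in> V \<rightarrow>\<^sub>E A. (\<lambda>v\<in>V. f (x v)) = y}. p x)"

end

theory Submission
  imports Defs
begin

text \<open>Choose three vertices e1 - m - e2 inducing a path or a fork (e1, e2 non-adjacent, m not a
  collider), values a1 \<noteq> a2 merged by f, and g with f g \<noteq> f a1.  The fair mixture of the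
  assignment that is g at e1, e2 and the one that is a2 at m (both a1 elsewhere) factorises
  over the DAG: toss the coin at the source of the path or fork and let the other two vertices
  copy it from their parent.  After applying f the two assignments differ only at e1 and e2,
  and there in the same way, so e1 and e2 become perfectly correlated.  But for a
  distribution that factorises, the law of (e1, e2) with their other ancestors frozen and all
  remaining vertices summed out has product form, since no vertex has both e1 and e2 in its
  family.\<close>

definition markov_kernels :: "'v set \<Rightarrow> ('v \<times> 'v) set \<Rightarrow> 'c set \<Rightarrow> ('v \<Rightarrow> 'c \<Rightarrow> ('v \<Rightarrow> 'c) \<Rightarrow> real) \<Rightarrow> bool" where
  "markov_kernels V E C q \<longleftrightarrow>
     (\<forall>v\<in>V. \<forall>u\<in>parents E v \<rightarrow>\<^sub>E C. (\<forall>c\<in>C. q v c u \<ge> 0) \<and> (\<Sum>c\<in>C. q v c u) = 1)"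

definition kernel_prod :: "('v \<times> 'v) set \<Rightarrow> 'v set \<Rightarrow> ('v \<Rightarrow> 'c \<Rightarrow> ('v \<Rightarrow> 'c) \<Rightarrow> real) \<Rightarrow> ('v \<Rightarrow> 'c) \<Rightarrow> real" where
  "kernel_prod E D q x = (\<Prod>v\<in>D. q v (x v) (restrict x (parents E v)))"

lemma im_iff:
  "p \<in> im V E C \<longleftrightarrow> is_distribution V C p \<and>
     (\<exists>q. markov_kernels V E C q \<and> (\<forall>x\<in>V \<rightarrow>\<^sub>E C. p x = kernel_prod E V q x))"
  by (simp add: im_def markov_kernels_def kernel_prod_def)

lemma is_dag_irrefl: "is_dag V E \<Longrightarrow> (x, x) \<notin> E"
  unfolding is_dag_def acyclic_def by blast

lemma is_dag_asym: "is_dag V E \<Longrightarrow> (x, y) \<in> E \<Longrightarrow> (y, x) \<notin> E"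
  unfolding is_dag_def acyclic_def by (meson r_into_trancl' trancl_into_trancl)

lemma is_dag_finite_edges: "is_dag V E \<Longrightarrow> finite E"
  unfolding is_dag_def by (meson finite_SigmaI finite_subset)

lemma is_dag_obtain_sink:
  assumes "is_dag V E" "D \<noteq> {}"
  obtains s where "s \<in> D" "\<And>v. v \<in> D \<Longrightarrow> (s, v) \<notin> E"
proof -
  have "wf (E\<inverse>)"
    using assms(1) is_dag_finite_edges finite_acyclic_wf_converse unfolding is_dag_def by blast
  then obtain s where "s \<in> D" "\<And>v. (v, s) \<in> E\<inverse> \<Longrightarrow> v \<notin> D"
    using assms(2) by (rule wfE_min') blast
  then show thesis using that by blast
qed

lemma is_dag_eq_by_parents:
  assumes dag: "is_dag V E" and xy: "x \<in> V \<rightarrow>\<^sub>E C" "y \<in> V \<rightarrow>\<^sub>E C"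
    and step: "\<And>v. v \<in> V \<Longrightarrow> restrict x (parents E v) = restrict y (parents E v) \<Longrightarrow> x v = y v"
  shows "x = y"
proof -
  have "wf E"
    using dag is_dag_finite_edges finite_acyclic_wf unfolding is_dag_def by blast
  then have "v \<in> V \<longrightarrow> x v = y v" for v
  proof (induction v rule: wf_induct_rule)
    case (less v)
    have "parents E v \<subseteq> V"
      using dag unfolding is_dag_def parents_def by blast
    then have "restrict x (parents E v) = restrict y (parents E v)"
      using less.IH by (intro ext) (auto simp: restrict_def parents_def)
    then show ?case using step by blast
  qed
  then show ?thesis using xy by (auto intro: PiE_ext)
qed

lemma kernel_prod_upd_sink:
  assumes "finite D" "s \<in> D" "\<And>v. v \<in> D \<Longrightarrow> (s, v) \<notin> E"
  shows "kernel_prod E D q (y(s := b)) = q s b (restrict y (parents E s)) * kernel_prod E (D - {s}) q y"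
proof -
  have restrict_upd: "restrict (y(s := b)) (parents E v) = restrict y (parents E v)" if "v \<in> D" for v
    using assms(3)[OF that] by (auto simp: restrict_def parents_def)
  then have "kernel_prod E (D - {s}) q (y(s := b)) = kernel_prod E (D - {s}) q y"
    unfolding kernel_prod_def by (intro prod.cong) auto
  moreover have "restrict (y(s := b)) (parents E s) = restrict y (parents E s)"
    using restrict_upd assms(2) .
  ultimately show ?thesis
    using assms(1,2) unfolding kernel_prod_def by (simp add: prod.remove)
qed

lemma bij_betw_fun_upd_agreeing:
  assumes z: "z \<in> V \<rightarrow>\<^sub>E C" and s: "s \<in> D" "D \<subseteq> V"
  shows "bij_betw (\<lambda>(y, b). y(s := b))
           ({y\<in>V \<rightarrow>\<^sub>E C. \<forall>v\<in>V - (D - {s}). y v = z v} \<times> C)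
           {y\<in>V \<rightarrow>\<^sub>E C. \<forall>v\<in>V - D. y v = z v}"
    (is "bij_betw ?upd (?T' \<times> C) ?T")
proof (rule bij_betw_imageI)
  have sV: "s \<in> V" using s by blast
  show "inj_on ?upd (?T' \<times> C)"
    using sV by (auto simp: inj_on_def fun_eq_iff)
  show "?upd ` (?T' \<times> C) = ?T"
  proof
    show "?upd ` (?T' \<times> C) \<subseteq> ?T"
      using sV s by (auto simp: PiE_iff extensional_def)
    show "?T \<subseteq> ?upd ` (?T' \<times> C)"
    proof
      fix y assume "y \<in> ?T"
      then have "y(s := z s) \<in> ?T'" "y s \<in> C"
        using sV z by (auto simp: PiE_iff extensional_def)
      then show "y \<in> ?upd ` (?T' \<times> C)"
        by (intro image_eqI[of _ _ "(y(s := z s), y s)"]) auto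
    qed
  qed
qed

lemma sum_kernel_prod_remove_sink:
  fixes z :: "'v \<Rightarrow> 'c"
  assumes dag: "is_dag V E" and kernels: "markov_kernels V E C q"
    and z: "z \<in> V \<rightarrow>\<^sub>E C" and DV: "D \<subseteq> V"
    and s: "s \<in> D" and sink: "\<And>v. v \<in> D \<Longrightarrow> (s, v) \<notin> E"
  shows "(\<Sum>y\<in>{y\<in>V \<rightarrow>\<^sub>E C. \<forall>v\<in>V - D. y v = z v}. kernel_prod E D q y)
       = (\<Sum>y\<in>{y\<in>V \<rightarrow>\<^sub>E C. \<forall>v\<in>V - (D - {s}). y v = z v}. kernel_prod E (D - {s}) q y)"
    (is "(\<Sum>y\<in>?T. _) = (\<Sum>y\<in>?T'. _)")
proof -
  have finV: "finite V" using dag unfolding is_dag_def by blast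
  have sV: "s \<in> V" using s DV by blast
  note bij = bij_betw_fun_upd_agreeing[OF z s DV]
  have pa: "restrict y (parents E s) \<in> parents E s \<rightarrow>\<^sub>E C" if "y \<in> ?T'" for y
    using that dag unfolding is_dag_def parents_def by (auto simp: PiE_iff)
  have "(\<Sum>y\<in>?T. kernel_prod E D q y) = (\<Sum>(y, b)\<in>?T' \<times> C. kernel_prod E D q (y(s := b)))"
    using sum.reindex_bij_betw[OF bij, of "kernel_prod E D q"] by (simp add: case_prod_unfold)
  also have "\<dots> = (\<Sum>y\<in>?T'. (\<Sum>b\<in>C. q s b (restrict y (parents E s))) * kernel_prod E (D - {s}) q y)"
    using finite_subset[OF DV finV] s sink
    by (simp add: kernel_prod_upd_sink sum.cartesian_product[symmetric] sum_distrib_right)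
  also have "\<dots> = (\<Sum>y\<in>?T'. kernel_prod E (D - {s}) q y)"
    using kernels sV pa unfolding markov_kernels_def by (intro sum.cong) auto
  finally show ?thesis .
qed

lemma sum_kernel_prod_eq_1:
  fixes z :: "'v \<Rightarrow> 'c"
  assumes dag: "is_dag V E" and kernels: "markov_kernels V E C q"
    and z: "z \<in> V \<rightarrow>\<^sub>E C" and DV: "D \<subseteq> V"
  shows "(\<Sum>y\<in>{y\<in>V \<rightarrow>\<^sub>E C. \<forall>v\<in>V - D. y v = z v}. kernel_prod E D q y) = 1"
proof -
  have "finite D" using DV dag finite_subset unfolding is_dag_def by blast
  then show ?thesis using DV
  proof (induction D rule: finite_psubset_induct)
    case (psubset D)
    show ?case
    proof (cases "D = {}")
      case True
      then have "{y\<in>V \<rightarrow>\<^sub>E C. \<forall>v\<in>V - D. y v = z v} = {z}"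
        using z by (auto intro: PiE_ext)
      then show ?thesis using True by (simp add: kernel_prod_def)
    next
      case False
      then obtain s where "s \<in> D" "\<And>v. v \<in> D \<Longrightarrow> (s, v) \<notin> E"
        using is_dag_obtain_sink[OF dag] by blast
      then show ?thesis
        using sum_kernel_prod_remove_sink[OF dag kernels z psubset.prems]
          psubset.IH[of "D - {s}"] psubset.prems by auto
    qed
  qed
qed

definition ancestral :: "('v \<times> 'v) set \<Rightarrow> 'v set \<Rightarrow> bool" where
  "ancestral E S \<longleftrightarrow> (\<forall>v\<in>S. parents E v \<subseteq> S)"

lemma sum_kernel_prod_agreeing_on_ancestral:
  fixes z :: "'v \<Rightarrow> 'c"
  assumes dag: "is_dag V E" and kernels: "markov_kernels V E C q"
    and z: "z \<in> V \<rightarrow>\<^sub>E C" and SV: "S \<subseteq> V" and anc: "ancestral E S"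
  shows "(\<Sum>y\<in>{y\<in>V \<rightarrow>\<^sub>E C. \<forall>v\<in>S. y v = z v}. kernel_prod E V q y) = kernel_prod E S q z"
proof -
  let ?T = "{y\<in>V \<rightarrow>\<^sub>E C. \<forall>v\<in>S. y v = z v}"
  have finV: "finite V" using dag unfolding is_dag_def by blast
  have "kernel_prod E V q y = kernel_prod E S q z * kernel_prod E (V - S) q y" if "y \<in> ?T" for y
  proof -
    have "kernel_prod E S q y = kernel_prod E S q z"
      unfolding kernel_prod_def
    proof (rule prod.cong[OF refl])
      fix v assume "v \<in> S"
      moreover have "parents E v \<subseteq> S" using \<open>v \<in> S\<close> anc unfolding ancestral_def by blast
      ultimately have "restrict y (parents E v) = restrict z (parents E v)" "y v = z v"
        using that by (auto simp: restrict_def intro!: ext)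
      then show "q v (y v) (restrict y (parents E v)) = q v (z v) (restrict z (parents E v))"
        by simp
    qed
    moreover have "kernel_prod E V q y = kernel_prod E (V - S) q y * kernel_prod E S q y"
      unfolding kernel_prod_def by (rule prod.subset_diff[OF SV finV])
    ultimately show ?thesis by simp
  qed
  then have "(\<Sum>y\<in>?T. kernel_prod E V q y) = kernel_prod E S q z * (\<Sum>y\<in>?T. kernel_prod E (V - S) q y)"
    by (simp add: sum_distrib_left)
  moreover have "V - (V - S) = S" using SV by blast
  then have "(\<Sum>y\<in>?T. kernel_prod E (V - S) q y) = 1"
    using sum_kernel_prod_eq_1[OF dag kernels z, of "V - S"] by simp
  ultimately show ?thesis by simp
qed

definition two_point_dist :: "'x \<Rightarrow> 'x \<Rightarrow> 'x \<Rightarrow> real" where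
  "two_point_dist x1 x2 = (\<lambda>x. (if x = x1 then 1/2 else 0) + (if x = x2 then 1/2 else 0))"

lemma sum_two_point_dist:
  "finite T \<Longrightarrow> (\<Sum>x\<in>T. two_point_dist x1 x2 x) = (if x1 \<in> T then 1/2 else 0) + (if x2 \<in> T then 1/2 else 0)"
  by (simp add: two_point_dist_def sum.distrib)

lemma is_distribution_two_point_dist:
  assumes "finite V" "finite C" "x1 \<in> V \<rightarrow>\<^sub>E C" "x2 \<in> V \<rightarrow>\<^sub>E C"
  shows "is_distribution V C (two_point_dist x1 x2)"
  unfolding is_distribution_def
proof (intro conjI allI impI ballI)
  show "two_point_dist x1 x2 x = 0" if "x \<notin> V \<rightarrow>\<^sub>E C" for x
    using that assms by (auto simp: two_point_dist_def)
  show "two_point_dist x1 x2 x \<ge> 0" for x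
    by (simp add: two_point_dist_def)
  show "(\<Sum>x\<in>V \<rightarrow>\<^sub>E C. two_point_dist x1 x2 x) = 1"
    using assms by (simp add: sum_two_point_dist finite_PiE)
qed

lemma push_two_point_dist:
  assumes "finite V" "finite A" "x1 \<in> V \<rightarrow>\<^sub>E A" "x2 \<in> V \<rightarrow>\<^sub>E A"
  shows "push V A f (two_point_dist x1 x2) = two_point_dist (\<lambda>v\<in>V. f (x1 v)) (\<lambda>v\<in>V. f (x2 v))"
proof
  fix y
  let ?fibre = "{x \<in> V \<rightarrow>\<^sub>E A. (\<lambda>v\<in>V. f (x v)) = y}"
  have "finite ?fibre"
    using assms(1,2) by (simp add: finite_PiE)
  then have "push V A f (two_point_dist x1 x2) y
      = (if x1 \<in> ?fibre then 1/2 else 0) + (if x2 \<in> ?fibre then 1/2 else 0)"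
    unfolding push_def by (rule sum_two_point_dist)
  also have "\<dots> = two_point_dist (\<lambda>v\<in>V. f (x1 v)) (\<lambda>v\<in>V. f (x2 v)) y"
    using assms(3,4) by (auto simp: two_point_dist_def)
  finally show "push V A f (two_point_dist x1 x2) y = two_point_dist (\<lambda>v\<in>V. f (x1 v)) (\<lambda>v\<in>V. f (x2 v)) y" .
qed

definition coin_kernels ::
    "('v \<times> 'v) set \<Rightarrow> 'v \<Rightarrow> ('v \<Rightarrow> 'c) \<Rightarrow> ('v \<Rightarrow> 'c) \<Rightarrow> 'v \<Rightarrow> 'c \<Rightarrow> ('v \<Rightarrow> 'c) \<Rightarrow> real" where
  "coin_kernels E r x1 x2 v c u =
     (if v = r then two_point_dist (x1 r) (x2 r) c
      else if c = (if u = restrict x1 (parents E v) then x1 v else x2 v) then 1 else 0)"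

context
  fixes V :: "'v set" and E :: "('v \<times> 'v) set" and A :: "'c set"
    and r :: 'v and x1 x2 :: "'v \<Rightarrow> 'c"
  assumes dag: "is_dag V E" and finA: "finite A"
    and x12: "x1 \<in> V \<rightarrow>\<^sub>E A" "x2 \<in> V \<rightarrow>\<^sub>E A"
    and root: "r \<in> V" "x1 r \<noteq> x2 r"
    and propagate: "\<And>v. v \<in> V \<Longrightarrow> v \<noteq> r \<Longrightarrow> x1 v \<noteq> x2 v \<Longrightarrow> \<exists>u\<in>parents E v. x1 u \<noteq> x2 u"
begin

private abbreviation "q \<equiv> coin_kernels E r x1 x2"

lemma coin_kernels_nonroot_x2:
  assumes "v \<in> V" "v \<noteq> r"
  shows "q v c (restrict x2 (parents E v)) = (if c = x2 v then 1 else 0)"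
proof (cases "restrict x2 (parents E v) = restrict x1 (parents E v)")
  case True
  then have "\<forall>u\<in>parents E v. x1 u = x2 u" by (metis restrict_apply')
  then show ?thesis using propagate[OF assms] True assms(2) by (auto simp: coin_kernels_def)
qed (use assms(2) in \<open>simp add: coin_kernels_def\<close>)

lemma markov_kernels_coin_kernels: "markov_kernels V E A q"
  unfolding markov_kernels_def
proof (intro ballI conjI)
  fix v u assume v: "v \<in> V"
  show "q v c u \<ge> 0" for c by (simp add: coin_kernels_def two_point_dist_def)
  have "x1 r \<in> A" "x2 r \<in> A" "x1 v \<in> A" "x2 v \<in> A" using root(1) v x12 by auto
  then show "(\<Sum>c\<in>A. q v c u) = 1"
    using finA by (cases "v = r") (simp_all add: coin_kernels_def sum_two_point_dist)
qed

lemma kernel_prod_coin_kernels_points: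
  assumes "x = x1 \<or> x = x2"
  shows "kernel_prod E V q x = 1/2"
proof -
  have "q v (x v) (restrict x (parents E v)) = (if v = r then 1/2 else 1)" if v: "v \<in> V" for v
  proof (cases "v = r")
    case False
    then show ?thesis
      using assms coin_kernels_nonroot_x2[OF v False, of "x2 v"] by (auto simp: coin_kernels_def split: if_splits)
  qed (use assms root(2) in \<open>auto simp: coin_kernels_def two_point_dist_def\<close>)
  then have "kernel_prod E V q x = (\<Prod>v\<in>V. if v = r then 1/2 else 1)"
    unfolding kernel_prod_def by (intro prod.cong) auto
  then show ?thesis using dag root(1) unfolding is_dag_def by simp
qed

text \<open>A nonzero weight forces every vertex other than r to copy, so the assignment is
  propagated from its value at r.\<close>
lemma kernel_prod_coin_kernels_off:
  assumes x: "x \<in> V \<rightarrow>\<^sub>E A" "x \<noteq> x1" "x \<noteq> x2"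
  shows "kernel_prod E V q x = 0"
proof (rule ccontr)
  assume "kernel_prod E V q x \<noteq> 0"
  then have nz: "q v (x v) (restrict x (parents E v)) \<noteq> 0" if "v \<in> V" for v
    using that dag unfolding kernel_prod_def is_dag_def by auto
  have copies: "x v = (if restrict x (parents E v) = restrict x1 (parents E v) then x1 v else x2 v)"
    if "v \<in> V" "v \<noteq> r" for v
    using nz[OF that(1)] that(2) unfolding coin_kernels_def by (metis (full_types))
  have "x r = x1 r \<or> x r = x2 r"
    using nz[OF root(1)] by (auto simp: coin_kernels_def two_point_dist_def split: if_splits)
  then show False
  proof
    assume "x r = x1 r"
    then have "x = x1"
      using copies by (intro is_dag_eq_by_parents[OF dag x(1) x12(1)]) (metis (full_types))
    then show False using x by blast
  next
    assume xr: "x r = x2 r"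
    have "x = x2"
    proof (rule is_dag_eq_by_parents[OF dag x(1) x12(2)])
      fix v assume v: "v \<in> V" and pa: "restrict x (parents E v) = restrict x2 (parents E v)"
      show "x v = x2 v"
      proof (cases "v = r")
        case False
        then have "q v (x v) (restrict x2 (parents E v)) \<noteq> 0" using nz[OF v] pa by simp
        then show ?thesis using coin_kernels_nonroot_x2[OF v False] by (simp split: if_splits)
      qed (use xr in simp)
    qed
    then show False using x by blast
  qed
qed

lemma two_point_dist_in_im: "two_point_dist x1 x2 \<in> im V E A"
proof -
  have "x1 \<noteq> x2" using root by blast
  then have "\<forall>x\<in>V \<rightarrow>\<^sub>E A. two_point_dist x1 x2 x = kernel_prod E V q x"
    using kernel_prod_coin_kernels_points kernel_prod_coin_kernels_off
    by (auto simp: two_point_dist_def)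
  moreover have "finite V" using dag unfolding is_dag_def by blast
  ultimately show ?thesis
    using markov_kernels_coin_kernels is_distribution_two_point_dist[OF _ finA x12]
    unfolding im_iff by blast
qed

end

lemma prod_exchange_separated:
  fixes g :: "'i \<Rightarrow> 'a \<Rightarrow> 'b \<Rightarrow> 'c::comm_monoid_mult"
  assumes "\<And>i. i \<in> I \<Longrightarrow> (\<forall>a a' c. g i a c = g i a' c) \<or> (\<forall>a c c'. g i a c = g i a c')"
  shows "(\<Prod>i\<in>I. g i a c) * (\<Prod>i\<in>I. g i a' c') = (\<Prod>i\<in>I. g i a c') * (\<Prod>i\<in>I. g i a' c)"
proof -
  have "g i a c * g i a' c' = g i a c' * g i a' c" if "i \<in> I" for i
    using assms[OF that] by (metis mult.commute)
  then show ?thesis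
    by (simp add: prod.distrib[symmetric] cong: prod.cong)
qed

definition ancestors :: "('v \<times> 'v) set \<Rightarrow> 'v set \<Rightarrow> 'v set" where
  "ancestors E T = {v. \<exists>w\<in>T. (v, w) \<in> E\<^sup>*}"

lemma ancestral_ancestors: "ancestral E (ancestors E T)"
  unfolding ancestral_def ancestors_def parents_def
  by (auto intro: converse_rtrancl_into_rtrancl)

lemma ancestors_subset: "E \<subseteq> V \<times> V \<Longrightarrow> T \<subseteq> V \<Longrightarrow> ancestors E T \<subseteq> V"
  unfolding ancestors_def by (auto elim: converse_rtranclE)

text \<open>A common child of e1 and e2 that is an ancestor of e1 or e2 would close a directed cycle.\<close>
lemma ancestors_no_common_family:
  assumes dag: "is_dag V E" and e: "e1 \<noteq> e2" "(e1, e2) \<notin> E" "(e2, e1) \<notin> E"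
    and v: "v \<in> ancestors E {e1, e2}"
  shows "e1 \<notin> insert v (parents E v) \<or> e2 \<notin> insert v (parents E v)"
proof (rule ccontr)
  assume "\<not> ?thesis"
  then have "v \<noteq> e1" "v \<noteq> e2" "(e1, v) \<in> E" "(e2, v) \<in> E"
    using e by (auto simp: parents_def)
  moreover obtain w where "w \<in> {e1, e2}" "(v, w) \<in> E\<^sup>*"
    using v unfolding ancestors_def by blast
  ultimately have "(w, w) \<in> E\<^sup>+"
    by (auto intro: rtrancl_into_trancl2)
  then show False
    using dag unfolding is_dag_def acyclic_def by blast
qed

lemma kernel_prod_ancestors_exchange:
  assumes dag: "is_dag V E" and e: "e1 \<noteq> e2" "(e1, e2) \<notin> E" "(e2, e1) \<notin> E"
  defines "S \<equiv> ancestors E {e1, e2}"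
  shows "kernel_prod E S q (z(e1 := a, e2 := c)) * kernel_prod E S q (z(e1 := a', e2 := c'))
       = kernel_prod E S q (z(e1 := a, e2 := c')) * kernel_prod E S q (z(e1 := a', e2 := c))"
proof -
  define g where
    "g v s t = q v ((z(e1 := s, e2 := t)) v) (restrict (z(e1 := s, e2 := t)) (parents E v))" for v s t
  have "(\<Prod>v\<in>S. g v a c) * (\<Prod>v\<in>S. g v a' c') = (\<Prod>v\<in>S. g v a c') * (\<Prod>v\<in>S. g v a' c)"
  proof (rule prod_exchange_separated)
    fix v assume "v \<in> S"
    then have "e1 \<notin> insert v (parents E v) \<or> e2 \<notin> insert v (parents E v)"
      using ancestors_no_common_family[OF dag e] unfolding S_def by blast
    then show "(\<forall>s s' t. g v s t = g v s' t) \<or> (\<forall>s t t'. g v s t = g v s t')"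
    proof
      assume "e1 \<notin> insert v (parents E v)"
      then have "g v s t = g v s' t" for s s' t
        unfolding g_def by (intro arg_cong2[where f = "q v"]) (auto simp: restrict_def fun_eq_iff)
      then show ?thesis by blast
    next
      assume "e2 \<notin> insert v (parents E v)"
      then have "g v s t = g v s t'" for s t t'
        unfolding g_def by (intro arg_cong2[where f = "q v"]) (auto simp: restrict_def fun_eq_iff)
      then show ?thesis by blast
    qed
  qed
  then show ?thesis unfolding kernel_prod_def g_def .
qed

text \<open>The law of two non-adjacent vertices, with their other ancestors frozen and all
  remaining vertices summed out, has the product form of the previous lemma, so it cannot put
  all its mass on two pairs (a, c) and (a', c') with a \<noteq> a' and c \<noteq> c'.\<close>
lemma two_point_dist_not_in_im:
  assumes dag: "is_dag V E" and finC: "finite C"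
    and e: "e1 \<in> V" "e2 \<in> V" "e1 \<noteq> e2" "(e1, e2) \<notin> E" "(e2, e1) \<notin> E"
    and z: "z \<in> V \<rightarrow>\<^sub>E C"
    and vals: "a \<in> C" "a' \<in> C" "c \<in> C" "c' \<in> C" "a \<noteq> a'" "c \<noteq> c'"
  shows "two_point_dist (z(e1 := a, e2 := c)) (z(e1 := a', e2 := c')) \<notin> im V E C"
proof
  assume "two_point_dist (z(e1 := a, e2 := c)) (z(e1 := a', e2 := c')) \<in> im V E C"
  then obtain q where kernels: "markov_kernels V E C q"
    and fact: "\<forall>y\<in>V \<rightarrow>\<^sub>E C. two_point_dist (z(e1 := a, e2 := c)) (z(e1 := a', e2 := c')) y
                              = kernel_prod E V q y"
    unfolding im_iff by blast
  define S where "S = ancestors E {e1, e2}"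
  define Z where "Z s t = z(e1 := s, e2 := t)" for s t
  define marginal where "marginal s t = kernel_prod E S q (Z s t)" for s t
  have EV: "E \<subseteq> V \<times> V" and finV: "finite V" using dag unfolding is_dag_def by auto
  have SV: "S \<subseteq> V" unfolding S_def by (rule ancestors_subset[OF EV]) (use e in blast)
  have eS: "e1 \<in> S" "e2 \<in> S" unfolding S_def ancestors_def by blast+
  have Z_in: "Z s t \<in> V \<rightarrow>\<^sub>E C" if "s \<in> C" "t \<in> C" for s t
    using z that e unfolding Z_def by (auto simp: PiE_iff extensional_def)
  let ?T = "\<lambda>s t. {y\<in>V \<rightarrow>\<^sub>E C. \<forall>v\<in>S. y v = Z s t v}"
  have Z_mem: "Z s' t' \<in> ?T s t \<longleftrightarrow> s = s' \<and> t = t'" if "s' \<in> C" "t' \<in> C" for s t s' t'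
  proof
    assume "Z s' t' \<in> ?T s t"
    then have "Z s' t' e1 = Z s t e1" "Z s' t' e2 = Z s t e2" using eS by auto
    then show "s = s' \<and> t = t'" using e(3) by (simp add: Z_def)
  qed (use Z_in[OF that] in auto)
  have marginal_eq: "marginal s t = (if s = a \<and> t = c then 1/2 else 0) + (if s = a' \<and> t = c' then 1/2 else 0)"
    if "s \<in> C" "t \<in> C" for s t
  proof -
    have "marginal s t = (\<Sum>y\<in>?T s t. kernel_prod E V q y)"
      unfolding marginal_def S_def
      using sum_kernel_prod_agreeing_on_ancestral[OF dag kernels Z_in[OF that] _ ancestral_ancestors]
        SV S_def by simp
    also have "\<dots> = (\<Sum>y\<in>?T s t. two_point_dist (Z a c) (Z a' c') y)"
      using fact unfolding Z_def by (intro sum.cong) auto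
    also have "\<dots> = (if Z a c \<in> ?T s t then 1/2 else 0) + (if Z a' c' \<in> ?T s t then 1/2 else 0)"
      using finV finC by (intro sum_two_point_dist) (simp add: finite_PiE)
    finally show ?thesis
      using Z_mem vals by simp
  qed
  have "marginal a c * marginal a' c' = marginal a c' * marginal a' c"
    unfolding marginal_def Z_def S_def by (rule kernel_prod_ancestors_exchange[OF dag e(3-5)])
  then show False
    using marginal_eq vals by simp
qed

lemma graph_connected_three_adjacent:
  assumes conn: "graph_connected {u, w, y} E'"
    and "u \<noteq> w" "(u, w) \<notin> E'" "(w, u) \<notin> E'" "(u, u) \<notin> E'"
  shows "(u, y) \<in> E' \<or> (y, u) \<in> E'"
proof -
  let ?W = "{u, w, y}"
  let ?R = "(E' \<inter> ?W \<times> ?W) \<union> (E' \<inter> ?W \<times> ?W)\<inverse>"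
  have "(u, w) \<in> ?R\<^sup>*"
    using conn unfolding graph_connected_def by blast
  then obtain t where "(u, t) \<in> ?R"
    using \<open>u \<noteq> w\<close> by (metis converse_rtranclE)
  then show ?thesis
    using assms(3-5) by auto
qed

lemma is_v_structure_collider:
  assumes dag: "is_dag V E" and distinct: "u \<noteq> w" "u \<noteq> y" "w \<noteq> y"
    and nonadj: "(u, w) \<notin> E" "(w, u) \<notin> E" and into_y: "(u, y) \<in> E" "(w, y) \<in> E"
  shows "is_v_structure {u, w, y} (induced_edges E {u, w, y})"
proof -
  have "induced_edges E {u, w, y} = {(u, y), (w, y)}"
  proof
    show "{(u, y), (w, y)} \<subseteq> induced_edges E {u, w, y}"
      using into_y by (auto simp: induced_edges_def)
    show "induced_edges E {u, w, y} \<subseteq> {(u, y), (w, y)}"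
    proof
      fix e assume "e \<in> induced_edges E {u, w, y}"
      then obtain a b where "e = (a, b)" "(a, b) \<in> E" "a \<in> {u, w, y}" "b \<in> {u, w, y}"
        unfolding induced_edges_def by auto
      then show "e \<in> {(u, y), (w, y)}"
        using nonadj into_y is_dag_irrefl[OF dag] is_dag_asym[OF dag] by auto
    qed
  qed
  then show ?thesis
    unfolding is_v_structure_def using distinct
    by (intro exI[of _ u] exI[of _ w] exI[of _ y]) simp
qed

lemma obtain_non_collider_triple:
  assumes dag: "is_dag V E" and WV: "W \<subseteq> V" and card_W: "card W = 3"
    and conn: "graph_connected W (induced_edges E W)"
    and not_complete: "\<not> skeleton_complete W (induced_edges E W)"
    and not_v: "\<not> is_v_structure W (induced_edges E W)"
  obtains e1 m e2 where "e1 \<in> V" "m \<in> V" "e2 \<in> V" "e1 \<noteq> m" "m \<noteq> e2" "e1 \<noteq> e2"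
    "(e1, e2) \<notin> E" "(e2, e1) \<notin> E" "(m, e2) \<in> E" "(m, e1) \<in> E \<or> (e1, m) \<in> E"
proof -
  obtain u w where uw: "u \<in> W" "w \<in> W" "u \<noteq> w" "(u, w) \<notin> E" "(w, u) \<notin> E"
    using not_complete unfolding skeleton_complete_def induced_edges_def by blast
  have "card (W - {u, w}) = 1" using card_W uw by (simp add: card_Diff_subset)
  then obtain y where "W - {u, w} = {y}" by (meson card_1_singletonE)
  then have y: "y \<noteq> u" "y \<noteq> w" and W: "W = {u, w, y}" using uw by auto
  have irrefl: "(a, a) \<notin> induced_edges E W" for a
    using is_dag_irrefl[OF dag] by (simp add: induced_edges_def)
  have nonadj: "(u, w) \<notin> induced_edges E W" "(w, u) \<notin> induced_edges E W"
    using uw by (auto simp: induced_edges_def)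
  have "graph_connected {u, w, y} (induced_edges E W)" using conn W by simp
  then have "(u, y) \<in> induced_edges E W \<or> (y, u) \<in> induced_edges E W"
    using graph_connected_three_adjacent uw(3) nonadj irrefl by metis
  then have adj_u: "(u, y) \<in> E \<or> (y, u) \<in> E"
    unfolding induced_edges_def by blast
  have "graph_connected {w, u, y} (induced_edges E W)" using conn W by (simp add: insert_commute)
  then have "(w, y) \<in> induced_edges E W \<or> (y, w) \<in> induced_edges E W"
    using graph_connected_three_adjacent uw(3) nonadj irrefl by metis
  then have adj_w: "(w, y) \<in> E \<or> (y, w) \<in> E"
    unfolding induced_edges_def by blast
  have "(y, u) \<in> E \<or> (y, w) \<in> E"
  proof (rule ccontr)
    assume "\<not> ?thesis"
    then have "is_v_structure W (induced_edges E W)"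
      using adj_u adj_w uw y unfolding W by (intro is_v_structure_collider[OF dag]) auto
    then show False using not_v by blast
  qed
  moreover have "u \<in> V" "w \<in> V" "y \<in> V" using uw WV W by auto
  ultimately show thesis
  proof (elim disjE)
    assume "(y, u) \<in> E"
    with adj_w uw y \<open>u \<in> V\<close> \<open>w \<in> V\<close> \<open>y \<in> V\<close> show thesis
      by (intro that[of w y u]) auto
  next
    assume "(y, w) \<in> E"
    with adj_u uw y \<open>u \<in> V\<close> \<open>w \<in> V\<close> \<open>y \<in> V\<close> show thesis
      by (intro that[of u y w]) auto
  qed
qed

lemma obtain_collision:
  assumes "card (f ` A) < card A"
  obtains a1 a2 where "a1 \<in> A" "a2 \<in> A" "a1 \<noteq> a2" "f a1 = f a2"
proof -
  have "\<not> inj_on f A" using assms card_image by fastforce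
  then show thesis using that unfolding inj_on_def by blast
qed

lemma obtain_other_value:
  assumes "finite B" "card B > 1"
  obtains b' where "b' \<in> B" "b' \<noteq> b"
proof -
  have "\<not> B \<subseteq> {b}"
    using assms card_mono[of "{b}" B] by auto
  then show thesis using that by blast
qed

lemma two_point_dist_non_collider_in_im:
  assumes dag: "is_dag V E" and finA: "finite A"
    and vertices: "e1 \<in> V" "m \<in> V" "e2 \<in> V" "e1 \<noteq> m" "m \<noteq> e2" "e1 \<noteq> e2"
    and edges: "(m, e2) \<in> E" "(m, e1) \<in> E \<or> (e1, m) \<in> E"
    and vals: "a1 \<in> A" "a2 \<in> A" "g \<in> A" "a1 \<noteq> a2" "g \<noteq> a1"
  defines "x0 \<equiv> \<lambda>v\<in>V. a1"
  shows "two_point_dist (x0(e1 := g, e2 := g)) (x0(m := a2)) \<in> im V E A"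
proof -
  define x1 where "x1 = x0(e1 := g, e2 := g)"
  define x2 where "x2 = x0(m := a2)"
  define r where "r = (if (m, e1) \<in> E then m else e1)"
  have x12: "x1 \<in> V \<rightarrow>\<^sub>E A" "x2 \<in> V \<rightarrow>\<^sub>E A"
    using vertices vals unfolding x0_def x1_def x2_def by (auto simp: PiE_iff extensional_def)
  have "two_point_dist x1 x2 \<in> im V E A"
  proof (rule two_point_dist_in_im[OF dag finA x12])
    show "r \<in> V" "x1 r \<noteq> x2 r"
      using vertices vals unfolding r_def x0_def x1_def x2_def by auto
    fix v assume "v \<in> V" "v \<noteq> r" "x1 v \<noteq> x2 v"
    then have v: "v \<in> {e1, m, e2} - {r}"
      unfolding x0_def x1_def x2_def by (auto split: if_splits)
    show "\<exists>u\<in>parents E v. x1 u \<noteq> x2 u"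
    proof (cases "v = m")
      case True
      then have "(e1, v) \<in> E" "x1 e1 \<noteq> x2 e1"
        using v edges(2) vertices vals unfolding r_def x0_def x1_def x2_def by auto
      then show ?thesis unfolding parents_def by blast
    next
      case False
      then have "(m, v) \<in> E" "x1 m \<noteq> x2 m"
        using v edges vertices vals unfolding r_def x0_def x1_def x2_def by (auto split: if_splits)
      then show ?thesis unfolding parents_def by blast
    qed
  qed
  then show ?thesis unfolding x1_def x2_def .
qed

lemma push_im_not_subset_at_non_collider:
  assumes dag: "is_dag V E" and finA: "finite A" and surj: "f ` A = B"
    and cardAB: "card A > card B" "card B > 1"
    and vertices: "e1 \<in> V" "m \<in> V" "e2 \<in> V" "e1 \<noteq> m" "m \<noteq> e2" "e1 \<noteq> e2"
    and nonadj: "(e1, e2) \<notin> E" "(e2, e1) \<notin> E"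
    and edges: "(m, e2) \<in> E" "(m, e1) \<in> E \<or> (e1, m) \<in> E"
  shows "\<not> (push V A f ` im V E A \<subseteq> im V E B)"
proof
  assume sub: "push V A f ` im V E A \<subseteq> im V E B"
  have finV: "finite V" using dag unfolding is_dag_def by blast
  have finB: "finite B" using finA surj by blast
  obtain a1 a2 where a12: "a1 \<in> A" "a2 \<in> A" "a1 \<noteq> a2" "f a1 = f a2"
    using obtain_collision cardAB(1) surj by metis
  obtain g where g: "g \<in> A" "g \<noteq> a1" "f g \<noteq> f a1"
    using obtain_other_value[OF finB cardAB(2), of "f a1"] surj by blast
  define x0 where "x0 = (\<lambda>v\<in>V. a1)"
  define z where "z = (\<lambda>v\<in>V. f a1)"
  have x12: "x0(e1 := g, e2 := g) \<in> V \<rightarrow>\<^sub>E A" "x0(m := a2) \<in> V \<rightarrow>\<^sub>E A"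
    using vertices a12 g unfolding x0_def by (auto simp: PiE_iff extensional_def)
  have "(\<lambda>v\<in>V. f ((x0(e1 := g, e2 := g)) v)) = z(e1 := f g, e2 := f g)"
    "(\<lambda>v\<in>V. f ((x0(m := a2)) v)) = z(e1 := f a1, e2 := f a1)"
    using vertices a12 by (auto simp: x0_def z_def fun_eq_iff)
  then have "push V A f (two_point_dist (x0(e1 := g, e2 := g)) (x0(m := a2)))
      = two_point_dist (z(e1 := f g, e2 := f g)) (z(e1 := f a1, e2 := f a1))"
    using push_two_point_dist[OF finV finA x12, of f] by simp
  moreover have "two_point_dist (x0(e1 := g, e2 := g)) (x0(m := a2)) \<in> im V E A"
    unfolding x0_def by (rule two_point_dist_non_collider_in_im[OF dag finA vertices edges a12(1,2) g(1) a12(3) g(2)])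
  moreover have "two_point_dist (z(e1 := f g, e2 := f g)) (z(e1 := f a1, e2 := f a1)) \<notin> im V E B"
    using two_point_dist_not_in_im[OF dag finB vertices(1,3,6) nonadj] surj a12 g
    unfolding z_def by auto
  ultimately show False using sub by auto
qed

theorem mainTheorem2:
  fixes V :: "'v set" and E :: "('v \<times> 'v) set"
    and A :: "'a set" and B :: "'b set" and f :: "'a \<Rightarrow> 'b"
  assumes dag: "is_dag V E"
    and conn: "graph_connected V E"
    and card_V: "card V \<ge> 3"
    and W_ex: "\<exists>W \<subseteq> V. card W = 3 \<and> graph_connected W (induced_edges E W)
                 \<and> \<not> skeleton_complete W (induced_edges E W)
                 \<and> \<not> is_v_structure W (induced_edges E W)"
    and finA: "finite A" and finB: "finite B"
    and surj: "f ` A = B"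
    and cardAB: "card A > card B" "card B > 1"
  shows "\<not> (push V A f ` im V E A \<subseteq> im V E B)"
proof -
  obtain W where W: "W \<subseteq> V" "card W = 3" "graph_connected W (induced_edges E W)"
    "\<not> skeleton_complete W (induced_edges E W)" "\<not> is_v_structure W (induced_edges E W)"
    using W_ex by blast
  obtain e1 m e2 where triple: "e1 \<in> V" "m \<in> V" "e2 \<in> V" "e1 \<noteq> m" "m \<noteq> e2" "e1 \<noteq> e2"
    "(e1, e2) \<notin> E" "(e2, e1) \<notin> E" "(m, e2) \<in> E" "(m, e1) \<in> E \<or> (e1, m) \<in> E"
    by (rule obtain_non_collider_triple[OF dag W])
  show ?thesis
    by (rule push_im_not_subset_at_non_collider[OF dag finA surj cardAB triple])
qed

end
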